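(* Let $P$ be a poset on $[n]$ with natural labeling and let all edge weights $x_1,\dots,x_n$ be strictly positive. Then each of the four continuous time Markov chains on $\mathcal{L}(P)$ given by the uniform transposition graph, the transposition graph, the uniform promotion graph, and the promotion graph is irreducible, and hence has a unique stationary distribution.
   Context: $\mathcal{L}(P)=\{\pi\in S_n : i\prec j \Rightarrow \pi^{-1}_i<\pi^{-1}_j\}$ in one-line notation $\pi=\pi_1\cdots\pi_n$. $\pi\tau_i$ ($1\le i<n$) swaps $\pi_i,\pi_{i+1}$ if they are incomparable and is $\pi$ otherwise; operators act on the right; $\partial_j=\tau_j\cdots\tau_{n-1}$ ($1\le j\le n$). All four graphs have vertex set $\mathcal{L}(P)$: uniform transposition graph has edges $\pi\to\pi\tau_j$ of weight $x_j$ ($j\in[n-1]$); transposition graph has edges $\pi\to\pi\tau_j$ of weight $x_{\pi_j}$; uniform promotion graph has edges $\pi\to\pi\partial_j$ of weight $x_j$ ($j\in[n]$); promotion graph has edges $\pi\to\pi\partial_j$ of weight $x_{\pi_j}$. The associated continuous time chain traverses each edge at rate equal to its weight; it is irreducible if its digraph is strongly connected. *)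

theory Defs
  imports Complex_Main
begin

text \<open>Permutations are lists in one-line notation, with 1-based access pi_i = pi ! (i-1).\<close>

definition poset_on :: "nat \<Rightarrow> (nat \<times> nat) set \<Rightarrow> bool" where
  "poset_on n P \<longleftrightarrow> P \<subseteq> {1..n} \<times> {1..n} \<and> partial_order_on {1..n} P"

definition prec :: "(nat \<times> nat) set \<Rightarrow> nat \<Rightarrow> nat \<Rightarrow> bool" where
  "prec P i j \<longleftrightarrow> (i, j) \<in> P \<and> i \<noteq> j"

definition natural_labeling :: "nat \<Rightarrow> (nat \<times> nat) set \<Rightarrow> bool" where
  "natural_labeling n P \<longleftrightarrow> (\<forall>i j. prec P i j \<longrightarrow> i < j)"

definition ent :: "nat list \<Rightarrow> nat \<Rightarrow> nat" where
  "ent \<pi> i = \<pi> ! (i - 1)"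

definition is_perm :: "nat \<Rightarrow> nat list \<Rightarrow> bool" where
  "is_perm n \<pi> \<longleftrightarrow> length \<pi> = n \<and> distinct \<pi> \<and> set \<pi> = {1..n}"

definition inv_ent :: "nat list \<Rightarrow> nat \<Rightarrow> nat" where
  "inv_ent \<pi> i = (THE a. a \<in> {1..length \<pi>} \<and> ent \<pi> a = i)"

definition linext :: "nat \<Rightarrow> (nat \<times> nat) set \<Rightarrow> nat list set" where
  "linext n P = {\<pi>. is_perm n \<pi> \<and> (\<forall>i j. prec P i j \<longrightarrow> inv_ent \<pi> i < inv_ent \<pi> j)}"

definition incomparable :: "(nat \<times> nat) set \<Rightarrow> nat \<Rightarrow> nat \<Rightarrow> bool" where
  "incomparable P a b \<longleftrightarrow> \<not> prec P a b \<and> \<not> prec P b a"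

definition tau :: "(nat \<times> nat) set \<Rightarrow> nat list \<Rightarrow> nat \<Rightarrow> nat list" where
  "tau P \<pi> i = (if incomparable P (ent \<pi> i) (ent \<pi> (i + 1))
                then \<pi>[i - 1 := ent \<pi> (i + 1), i := ent \<pi> i] else \<pi>)"

text \<open>pi partial_j = pi tau_j tau_{j+1} ... tau_{n-1} (operators act on the right,
so tau_j is applied first).\<close>
definition prom :: "nat \<Rightarrow> (nat \<times> nat) set \<Rightarrow> nat list \<Rightarrow> nat \<Rightarrow> nat list" where
  "prom n P \<pi> j = fold (\<lambda>i \<sigma>. tau P \<sigma> i) [j..<n] \<pi>"

text \<open>A weighted (multi)digraph on vertex set V: from each vertex pi there is one edge
pi -> f pi j of weight w pi j for each label j in J.\<close>

definition rate :: "'v set \<Rightarrow> 'l set \<Rightarrow> ('v \<Rightarrow> 'l \<Rightarrow> 'v) \<Rightarrow> ('v \<Rightarrow> 'l \<Rightarrow> real) \<Rightarrow> 'v \<Rightarrow> 'v \<Rightarrow> real" where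
  "rate V J f w \<pi> \<sigma> = (\<Sum>j\<in>{j\<in>J. f \<pi> j = \<sigma>}. w \<pi> j)"

definition generator :: "'v set \<Rightarrow> 'l set \<Rightarrow> ('v \<Rightarrow> 'l \<Rightarrow> 'v) \<Rightarrow> ('v \<Rightarrow> 'l \<Rightarrow> real) \<Rightarrow> 'v \<Rightarrow> 'v \<Rightarrow> real" where
  "generator V J f w \<pi> \<sigma> =
     (if \<pi> = \<sigma> then - (\<Sum>\<rho>\<in>V - {\<pi>}. rate V J f w \<pi> \<rho>) else rate V J f w \<pi> \<sigma>)"

definition digraph_edges :: "'v set \<Rightarrow> 'l set \<Rightarrow> ('v \<Rightarrow> 'l \<Rightarrow> 'v) \<Rightarrow> ('v \<Rightarrow> 'l \<Rightarrow> real) \<Rightarrow> ('v \<times> 'v) set" where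
  "digraph_edges V J f w = {(\<pi>, \<sigma>). \<pi> \<in> V \<and> \<sigma> \<in> V \<and> (\<exists>j\<in>J. f \<pi> j = \<sigma> \<and> w \<pi> j > 0)}"

definition irreducible_chain :: "'v set \<Rightarrow> 'l set \<Rightarrow> ('v \<Rightarrow> 'l \<Rightarrow> 'v) \<Rightarrow> ('v \<Rightarrow> 'l \<Rightarrow> real) \<Rightarrow> bool" where
  "irreducible_chain V J f w \<longleftrightarrow>
     (\<forall>\<pi>\<in>V. \<forall>\<sigma>\<in>V. (\<pi>, \<sigma>) \<in> (digraph_edges V J f w)\<^sup>*)"

definition stationary :: "'v set \<Rightarrow> 'l set \<Rightarrow> ('v \<Rightarrow> 'l \<Rightarrow> 'v) \<Rightarrow> ('v \<Rightarrow> 'l \<Rightarrow> real) \<Rightarrow> ('v \<Rightarrow> real) \<Rightarrow> bool" where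
  "stationary V J f w p \<longleftrightarrow>
     (\<forall>\<pi>. \<pi> \<notin> V \<longrightarrow> p \<pi> = 0) \<and> (\<forall>\<pi>\<in>V. p \<pi> \<ge> 0) \<and> (\<Sum>\<pi>\<in>V. p \<pi>) = 1 \<and>
     (\<forall>\<sigma>\<in>V. (\<Sum>\<pi>\<in>V. p \<pi> * generator V J f w \<pi> \<sigma>) = 0)"

definition unique_stationary :: "'v set \<Rightarrow> 'l set \<Rightarrow> ('v \<Rightarrow> 'l \<Rightarrow> 'v) \<Rightarrow> ('v \<Rightarrow> 'l \<Rightarrow> real) \<Rightarrow> bool" where
  "unique_stationary V J f w \<longleftrightarrow> (\<exists>!p. stationary V J f w p)"

end

theory Submission
  imports Defs "HOL-Combinatorics.Permutations"
begin

text \<open>A finite generator always has an invariant probability vector; this follows by induction on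
  the state space, eliminating one state at a time by a Schur complement (the chain censored to
  the remaining states). If the digraph of positive rates is strongly connected, zeros of a
  nonnegative invariant vector spread backwards along edges, so invariant probability vectors are
  positive and, by a minimum-ratio argument, unique.

  By the natural labelling an adjacent descent of a linear extension consists of
  incomparable elements, so swapping descents sorts every linear extension to the identity; as the
  \<open>\<tau>\<^sub>j\<close> are involutions, the graph is strongly connected. For the promotion graphs,
  \<open>\<pi>\<partial>\<^sub>i = (\<pi>\<tau>\<^sub>i)\<partial>\<^sub>i\<^sub>+\<^sub>1\<close>, and \<open>\<partial>\<^sub>i\<^sub>+\<^sub>1\<close> permutes the finite set
  \<open>\<L>(P)\<close>, so following its cycle leads back from \<open>\<pi>\<partial>\<^sub>i\<close> to \<open>\<pi>\<tau>\<^sub>i\<close>.\<close>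

section \<open>Invariant measures of finite generators\<close>

definition q_matrix :: "'v set \<Rightarrow> ('v \<Rightarrow> 'v \<Rightarrow> real) \<Rightarrow> bool" where
  "q_matrix V Q \<longleftrightarrow>
     (\<forall>\<pi>\<in>V. \<forall>\<sigma>\<in>V. \<pi> \<noteq> \<sigma> \<longrightarrow> 0 \<le> Q \<pi> \<sigma>) \<and> (\<forall>\<pi>\<in>V. (\<Sum>\<sigma>\<in>V. Q \<pi> \<sigma>) = 0)"

definition invariant_measure :: "'v set \<Rightarrow> ('v \<Rightarrow> 'v \<Rightarrow> real) \<Rightarrow> ('v \<Rightarrow> real) \<Rightarrow> bool" where
  "invariant_measure V Q e \<longleftrightarrow>
     (\<forall>\<pi>\<in>V. 0 \<le> e \<pi>) \<and> (\<forall>\<sigma>\<in>V. (\<Sum>\<pi>\<in>V. e \<pi> * Q \<pi> \<sigma>) = 0)"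

lemma q_matrix_diag_nonpos:
  assumes "finite V" "q_matrix V Q" "v \<in> V"
  shows "Q v v \<le> 0"
proof -
  have "Q v v + (\<Sum>\<sigma>\<in>V - {v}. Q v \<sigma>) = 0"
    using assms by (simp add: q_matrix_def sum.remove)
  moreover have "0 \<le> (\<Sum>\<sigma>\<in>V - {v}. Q v \<sigma>)"
    using assms(2,3) by (auto simp: q_matrix_def intro!: sum_nonneg)
  ultimately show ?thesis by linarith
qed

lemma invariant_measure_absorbing_indicator:
  assumes "finite V" "q_matrix V Q" "v \<in> V" "Q v v = 0"
  shows "invariant_measure V Q (\<lambda>\<pi>. if \<pi> = v then 1 else 0)"
proof -
  have "(\<Sum>\<sigma>\<in>V - {v}. Q v \<sigma>) = 0"
    using assms sum.remove[OF assms(1,3), of "Q v"] by (simp add: q_matrix_def)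
  then have "\<forall>\<sigma>\<in>V - {v}. Q v \<sigma> = 0"
    using assms by (subst (asm) sum_nonneg_eq_0_iff) (auto simp: q_matrix_def)
  then have "\<forall>\<sigma>\<in>V. Q v \<sigma> = 0"
    using assms(4) by blast
  moreover have "(\<Sum>\<pi>\<in>V. (if \<pi> = v then 1 else 0) * Q \<pi> \<sigma>) = Q v \<sigma>" for \<sigma>
  proof -
    have "(\<Sum>\<pi>\<in>V. (if \<pi> = v then 1 else 0) * Q \<pi> \<sigma>) = (\<Sum>\<pi>\<in>V. if \<pi> = v then Q \<pi> \<sigma> else 0)"
      by (rule sum.cong) auto
    then show ?thesis
      using assms(1,3) by simp
  qed
  ultimately show ?thesis
    by (simp add: invariant_measure_def)
qed

text \<open>The Schur complement of the entry \<open>Q v v\<close>: the generator of the chain observed only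
  while it is off \<open>v\<close>.\<close>
definition censor :: "('v \<Rightarrow> 'v \<Rightarrow> real) \<Rightarrow> 'v \<Rightarrow> 'v \<Rightarrow> 'v \<Rightarrow> real" where
  "censor Q v \<pi> \<sigma> = Q \<pi> \<sigma> - Q \<pi> v * Q v \<sigma> / Q v v"

lemma q_matrix_censor:
  assumes fin: "finite V" and Q: "q_matrix V Q" and v: "v \<in> V" "Q v v \<noteq> 0"
  shows "q_matrix (V - {v}) (censor Q v)"
proof -
  have neg: "Q v v < 0"
    using q_matrix_diag_nonpos[OF fin Q v(1)] v(2) by linarith
  have row: "(\<Sum>\<sigma>\<in>V - {v}. Q \<pi> \<sigma>) = - Q \<pi> v" if "\<pi> \<in> V" for \<pi>
    using Q that sum.remove[OF fin v(1), of "Q \<pi>"] by (simp add: q_matrix_def)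
  have "0 \<le> censor Q v \<pi> \<sigma>" if "\<pi> \<in> V - {v}" "\<sigma> \<in> V - {v}" "\<pi> \<noteq> \<sigma>" for \<pi> \<sigma>
  proof -
    have "0 \<le> Q \<pi> \<sigma>" "0 \<le> Q \<pi> v * Q v \<sigma>"
      using Q that v(1) by (auto simp: q_matrix_def)
    then have "Q \<pi> v * Q v \<sigma> / Q v v \<le> 0"
      using neg by (simp add: divide_nonneg_neg)
    then show ?thesis
      using \<open>0 \<le> Q \<pi> \<sigma>\<close> by (simp add: censor_def)
  qed
  moreover have "(\<Sum>\<sigma>\<in>V - {v}. censor Q v \<pi> \<sigma>) = 0" if "\<pi> \<in> V - {v}" for \<pi>
    using that row[of \<pi>] row[OF v(1)] v(2)
    by (simp add: censor_def sum_subtractf sum_divide_distrib[symmetric] sum_distrib_left[symmetric])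
  ultimately show ?thesis
    by (simp add: q_matrix_def)
qed

lemma invariant_measure_censor_lift:
  assumes fin: "finite V" and Q: "q_matrix V Q" and v: "v \<in> V" "Q v v \<noteq> 0"
    and e: "invariant_measure (V - {v}) (censor Q v) e"
  shows "invariant_measure V Q (e(v := (\<Sum>\<rho>\<in>V - {v}. e \<rho> * Q \<rho> v) / - Q v v))"
    (is "invariant_measure V Q (e(v := ?ev))")
proof -
  have neg: "Q v v < 0"
    using q_matrix_diag_nonpos[OF fin Q v(1)] v(2) by linarith
  have "0 \<le> (\<Sum>\<rho>\<in>V - {v}. e \<rho> * Q \<rho> v)"
    using e Q v(1) by (auto simp: invariant_measure_def q_matrix_def intro!: sum_nonneg mult_nonneg_nonneg)
  then have "0 \<le> ?ev"
    using neg by (simp add: divide_nonneg_neg)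
  then have "\<forall>\<pi>\<in>V. 0 \<le> (e(v := ?ev)) \<pi>"
    using e by (auto simp: invariant_measure_def)
  moreover have "(\<Sum>\<pi>\<in>V. (e(v := ?ev)) \<pi> * Q \<pi> \<sigma>) = 0" if \<sigma>: "\<sigma> \<in> V" for \<sigma>
  proof -
    have split: "(\<Sum>\<pi>\<in>V. (e(v := ?ev)) \<pi> * Q \<pi> \<sigma>) = ?ev * Q v \<sigma> + (\<Sum>\<pi>\<in>V - {v}. e \<pi> * Q \<pi> \<sigma>)"
      using fin v(1) by (simp add: sum.remove)
    show ?thesis
    proof (cases "\<sigma> = v")
      case True
      then show ?thesis using split v(2) by simp
    next
      case False
      have "0 = (\<Sum>\<pi>\<in>V - {v}. e \<pi> * censor Q v \<pi> \<sigma>)"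
        using e \<sigma> False by (simp add: invariant_measure_def)
      also have "\<dots> = (\<Sum>\<pi>\<in>V - {v}. e \<pi> * Q \<pi> \<sigma>) + ?ev * Q v \<sigma>"
        by (simp add: censor_def algebra_simps sum_subtractf sum_divide_distrib[symmetric]
            sum_distrib_left sum_distrib_right)
      finally show ?thesis using split by simp
    qed
  qed
  ultimately show ?thesis
    by (simp add: invariant_measure_def)
qed

lemma invariant_measure_exists:
  assumes "finite V" "V \<noteq> {}" "q_matrix V Q"
  shows "\<exists>e. invariant_measure V Q e \<and> 0 < (\<Sum>\<pi>\<in>V. e \<pi>)"
  using assms
proof (induction V arbitrary: Q rule: finite_induct)
  case empty
  then show ?case by simp
next
  case (insert v F)
  show ?case
  proof (cases "Q v v = 0")
    case True
    then have "invariant_measure (insert v F) Q (\<lambda>\<pi>. if \<pi> = v then 1 else 0)"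
      using invariant_measure_absorbing_indicator[OF _ insert.prems(2)] insert.hyps by simp
    moreover have "(\<Sum>\<pi>\<in>insert v F. if \<pi> = v then 1 else 0) = (1::real)"
      using insert.hyps by simp
    ultimately show ?thesis
      by (intro exI[of _ "\<lambda>\<pi>. if \<pi> = v then 1 else 0"]) simp
  next
    case False
    have "F \<noteq> {}"
      using insert.prems(2) False by (auto simp: q_matrix_def)
    moreover have "q_matrix F (censor Q v)"
      using q_matrix_censor[OF _ insert.prems(2) _ False] insert.hyps by simp
    ultimately obtain e where e: "invariant_measure F (censor Q v) e" "0 < (\<Sum>\<pi>\<in>F. e \<pi>)"
      using insert.IH by blast
    define e' where "e' = e(v := (\<Sum>\<rho>\<in>F. e \<rho> * Q \<rho> v) / - Q v v)"
    have inv: "invariant_measure (insert v F) Q e'"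
      using invariant_measure_censor_lift[OF _ insert.prems(2) _ False, of e] e(1) insert.hyps
      by (simp add: e'_def)
    have "(\<Sum>\<pi>\<in>F. e' \<pi>) = (\<Sum>\<pi>\<in>F. e \<pi>)"
      using insert.hyps by (auto simp: e'_def intro!: sum.cong)
    then have "(\<Sum>\<pi>\<in>insert v F. e' \<pi>) = e' v + (\<Sum>\<pi>\<in>F. e \<pi>)"
      using insert.hyps by simp
    moreover have "0 \<le> e' v"
      using inv by (simp add: invariant_measure_def)
    ultimately show ?thesis
      using inv e(2) by (intro exI[of _ e']) simp
  qed
qed

lemma invariant_measure_zero_at_predecessor:
  assumes "finite V" "q_matrix V Q" "invariant_measure V Q e" "\<sigma> \<in> V" "e \<sigma> = 0"
    and "\<pi> \<in> V" "\<pi> \<noteq> \<sigma>" "0 < Q \<pi> \<sigma>"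
  shows "e \<pi> = 0"
proof -
  have "(\<Sum>\<rho>\<in>V. e \<rho> * Q \<rho> \<sigma>) = (\<Sum>\<rho>\<in>V - {\<sigma>}. e \<rho> * Q \<rho> \<sigma>)"
    using assms(1,4,5) by (simp add: sum.remove)
  then have "(\<Sum>\<rho>\<in>V - {\<sigma>}. e \<rho> * Q \<rho> \<sigma>) = 0"
    using assms(3,4) by (simp add: invariant_measure_def)
  moreover have "\<forall>\<rho>\<in>V - {\<sigma>}. 0 \<le> e \<rho> * Q \<rho> \<sigma>"
    using assms(2-4) by (auto simp: q_matrix_def invariant_measure_def)
  ultimately have "\<forall>\<rho>\<in>V - {\<sigma>}. e \<rho> * Q \<rho> \<sigma> = 0"
    using assms(1) sum_nonneg_eq_0_iff[of "V - {\<sigma>}" "\<lambda>\<rho>. e \<rho> * Q \<rho> \<sigma>"] by simp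
  then have "e \<pi> * Q \<pi> \<sigma> = 0"
    using assms(6,7) by simp
  then show ?thesis
    using assms(8) by simp
qed

lemma invariant_measure_zero_everywhere:
  assumes fin: "finite V" and Q: "q_matrix V Q" and e: "invariant_measure V Q e"
    and E: "\<And>\<pi> \<sigma>. (\<pi>, \<sigma>) \<in> E \<Longrightarrow> \<pi> \<in> V \<and> \<sigma> \<in> V \<and> (\<pi> \<noteq> \<sigma> \<longrightarrow> 0 < Q \<pi> \<sigma>)"
    and conn: "\<forall>\<pi>\<in>V. \<forall>\<sigma>\<in>V. (\<pi>, \<sigma>) \<in> E\<^sup>*"
    and zero: "\<sigma> \<in> V" "e \<sigma> = 0" and \<pi>: "\<pi> \<in> V"
  shows "e \<pi> = 0"
proof -
  have "(\<pi>, \<sigma>) \<in> E\<^sup>*"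
    using conn \<pi> zero(1) by blast
  then show ?thesis
  proof (induction rule: converse_rtrancl_induct)
    case base
    then show ?case using zero(2) .
  next
    case (step \<rho> \<tau>)
    then show ?case
      using invariant_measure_zero_at_predecessor[OF fin Q e, of \<tau> \<rho>] E by (cases "\<rho> = \<tau>") auto
  qed
qed

text \<open>\<open>q - m p\<close>, with \<open>m\<close> the minimal ratio \<open>q/p\<close>, is a nonnegative invariant vector
  with a zero, hence zero.\<close>
lemma invariant_measure_unique:
  assumes fin: "finite V" and Q: "q_matrix V Q"
    and edges: "\<And>\<pi> \<sigma>. (\<pi>, \<sigma>) \<in> E \<Longrightarrow> \<pi> \<in> V \<and> \<sigma> \<in> V \<and> (\<pi> \<noteq> \<sigma> \<longrightarrow> 0 < Q \<pi> \<sigma>)"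
    and conn: "\<forall>\<pi>\<in>V. \<forall>\<sigma>\<in>V. (\<pi>, \<sigma>) \<in> E\<^sup>*"
    and p: "invariant_measure V Q p" "(\<Sum>\<pi>\<in>V. p \<pi>) = 1"
    and q: "invariant_measure V Q q" "(\<Sum>\<pi>\<in>V. q \<pi>) = 1"
    and \<pi>: "\<pi> \<in> V"
  shows "q \<pi> = p \<pi>"
proof -
  have V: "V \<noteq> {}"
    using p(2) by auto
  have p_pos: "0 < p \<rho>" if "\<rho> \<in> V" for \<rho>
  proof (rule ccontr)
    assume "\<not> 0 < p \<rho>"
    moreover have "0 \<le> p \<rho>"
      using p(1) that by (simp add: invariant_measure_def)
    ultimately have "p \<rho> = 0"
      by simp
    then have "(\<Sum>\<pi>\<in>V. p \<pi>) = 0"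
      using invariant_measure_zero_everywhere[OF fin Q p(1) edges conn that] by simp
    then show False
      using p(2) by simp
  qed
  define m where "m = Min ((\<lambda>\<rho>. q \<rho> / p \<rho>) ` V)"
  have "m \<in> (\<lambda>\<rho>. q \<rho> / p \<rho>) ` V"
    unfolding m_def using fin V by (intro Min_in) auto
  then obtain \<rho>\<^sub>0 where \<rho>\<^sub>0: "\<rho>\<^sub>0 \<in> V" "m = q \<rho>\<^sub>0 / p \<rho>\<^sub>0"
    by auto
  define e where "e \<rho> = q \<rho> - m * p \<rho>" for \<rho>
  have "m * p \<rho> \<le> q \<rho>" if "\<rho> \<in> V" for \<rho>
  proof -
    have "m \<le> q \<rho> / p \<rho>"
      unfolding m_def using fin that by simp
    then show ?thesis
      using p_pos[OF that] by (simp add: pos_le_divide_eq)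
  qed
  moreover have "(\<Sum>\<rho>\<in>V. e \<rho> * Q \<rho> \<sigma>)
      = (\<Sum>\<rho>\<in>V. q \<rho> * Q \<rho> \<sigma>) - m * (\<Sum>\<rho>\<in>V. p \<rho> * Q \<rho> \<sigma>)" for \<sigma>
    by (simp add: e_def algebra_simps sum_subtractf sum_distrib_left)
  ultimately have e: "invariant_measure V Q e"
    using p(1) q(1) by (simp add: invariant_measure_def e_def)
  have "e \<rho>\<^sub>0 = 0"
    using \<rho>\<^sub>0 p_pos[OF \<rho>\<^sub>0(1)] by (simp add: e_def)
  then have q_eq: "q \<rho> = m * p \<rho>" if "\<rho> \<in> V" for \<rho>
    using invariant_measure_zero_everywhere[OF fin Q e edges conn \<rho>\<^sub>0(1) _ that] by (simp add: e_def)
  then have "(\<Sum>\<rho>\<in>V. q \<rho>) = m * (\<Sum>\<rho>\<in>V. p \<rho>)"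
    by (simp add: sum_distrib_left)
  then have "m = 1"
    using p(2) q(2) by simp
  then show ?thesis
    using q_eq[OF \<pi>] by simp
qed

lemma q_matrix_generator:
  assumes "finite V" "\<forall>\<pi>\<in>V. \<forall>j\<in>J. 0 \<le> w \<pi> j"
  shows "q_matrix V (generator V J f w)"
proof -
  have "(\<Sum>\<sigma>\<in>V. generator V J f w \<pi> \<sigma>) = 0" if "\<pi> \<in> V" for \<pi>
  proof -
    have "(\<Sum>\<sigma>\<in>V - {\<pi>}. generator V J f w \<pi> \<sigma>) = (\<Sum>\<sigma>\<in>V - {\<pi>}. rate V J f w \<pi> \<sigma>)"
      by (rule sum.cong) (auto simp: generator_def)
    then show ?thesis
      using assms(1) that by (simp add: sum.remove generator_def)
  qed
  moreover have "0 \<le> generator V J f w \<pi> \<sigma>" if "\<pi> \<in> V" "\<pi> \<noteq> \<sigma>" for \<pi> \<sigma>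
    using assms(2) that by (auto simp: generator_def rate_def intro!: sum_nonneg)
  ultimately show ?thesis
    by (simp add: q_matrix_def)
qed

lemma generator_pos_on_edge:
  assumes "finite J" "\<forall>j\<in>J. 0 \<le> w \<pi> j" "(\<pi>, \<sigma>) \<in> digraph_edges V J f w" "\<pi> \<noteq> \<sigma>"
  shows "0 < generator V J f w \<pi> \<sigma>"
proof -
  obtain j where "j \<in> J" "f \<pi> j = \<sigma>" "0 < w \<pi> j"
    using assms(3) by (auto simp: digraph_edges_def)
  then have "0 < rate V J f w \<pi> \<sigma>"
    unfolding rate_def using assms(1,2) by (intro sum_pos2[of _ j]) auto
  then show ?thesis
    using assms(4) by (simp add: generator_def)
qed

lemma stationary_iff_invariant_measure:
  "stationary V J f w p \<longleftrightarrow>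
     invariant_measure V (generator V J f w) p \<and> (\<Sum>\<pi>\<in>V. p \<pi>) = 1 \<and> (\<forall>\<pi>. \<pi> \<notin> V \<longrightarrow> p \<pi> = 0)"
  by (auto simp: stationary_def invariant_measure_def)

theorem irreducible_chain_unique_stationary:
  assumes fin: "finite V" "finite J" and V: "V \<noteq> {}"
    and w: "\<forall>\<pi>\<in>V. \<forall>j\<in>J. 0 \<le> w \<pi> j" and irr: "irreducible_chain V J f w"
  shows "unique_stationary V J f w"
proof -
  let ?Q = "generator V J f w"
  have Q: "q_matrix V ?Q"
    using q_matrix_generator[OF fin(1) w] .
  obtain e where e: "invariant_measure V ?Q e" "0 < (\<Sum>\<pi>\<in>V. e \<pi>)"
    using invariant_measure_exists[OF fin(1) V Q] by blast
  define p where "p \<pi> = (if \<pi> \<in> V then e \<pi> / (\<Sum>\<rho>\<in>V. e \<rho>) else 0)" for \<pi>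
  have "(\<Sum>\<pi>\<in>V. p \<pi>) = 1"
    using e(2) by (simp add: p_def sum_divide_distrib[symmetric])
  moreover have "(\<Sum>\<pi>\<in>V. p \<pi> * ?Q \<pi> \<sigma>) = (\<Sum>\<pi>\<in>V. e \<pi> * ?Q \<pi> \<sigma>) / (\<Sum>\<rho>\<in>V. e \<rho>)" for \<sigma>
    by (simp add: p_def sum_divide_distrib)
  ultimately have p: "stationary V J f w p"
    using e by (simp add: stationary_iff_invariant_measure invariant_measure_def p_def)
  have edges: "\<pi> \<in> V \<and> \<sigma> \<in> V \<and> (\<pi> \<noteq> \<sigma> \<longrightarrow> 0 < ?Q \<pi> \<sigma>)"
    if "(\<pi>, \<sigma>) \<in> digraph_edges V J f w" for \<pi> \<sigma>
    using that w generator_pos_on_edge[OF fin(2) _ that] by (auto simp: digraph_edges_def)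
  have conn: "\<forall>\<pi>\<in>V. \<forall>\<sigma>\<in>V. (\<pi>, \<sigma>) \<in> (digraph_edges V J f w)\<^sup>*"
    using irr by (simp add: irreducible_chain_def)
  have "q = p" if q: "stationary V J f w q" for q
  proof
    fix \<pi>
    show "q \<pi> = p \<pi>"
    proof (cases "\<pi> \<in> V")
      case True
      then show ?thesis
        using p q invariant_measure_unique[OF fin(1) Q edges conn] by (simp add: stationary_iff_invariant_measure)
    next
      case False
      then show ?thesis
        using p q by (simp add: stationary_iff_invariant_measure)
    qed
  qed
  with p show ?thesis
    by (auto simp: unique_stationary_def)
qed


section \<open>Linear extensions and adjacent transpositions\<close>

lemma ent_Suc [simp]: "ent \<pi> (Suc k) = \<pi> ! k"
  by (simp add: ent_def)

lemma inv_ent_nth: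
  assumes "distinct \<pi>" "k < length \<pi>"
  shows "inv_ent \<pi> (\<pi> ! k) = Suc k"
  unfolding inv_ent_def
proof (rule the_equality)
  fix a
  assume a: "a \<in> {1..length \<pi>} \<and> ent \<pi> a = \<pi> ! k"
  then have "\<pi> ! (a - 1) = \<pi> ! k" "a - 1 < length \<pi>"
    by (auto simp: ent_def)
  then have "a - 1 = k"
    using assms nth_eq_iff_index_eq by blast
  then show "a = Suc k"
    using a by auto
qed (use assms in auto)

lemma linext_iff:
  assumes "P \<subseteq> {1..n} \<times> {1..n}"
  shows "\<pi> \<in> linext n P \<longleftrightarrow> is_perm n \<pi> \<and> (\<forall>k<n. \<forall>l<n. prec P (\<pi> ! k) (\<pi> ! l) \<longrightarrow> k < l)"
proof (cases "is_perm n \<pi>")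
  case True
  then have \<pi>: "length \<pi> = n" "distinct \<pi>" "set \<pi> = {1..n}"
    by (auto simp: is_perm_def)
  have "(\<forall>i j. prec P i j \<longrightarrow> inv_ent \<pi> i < inv_ent \<pi> j)
      \<longleftrightarrow> (\<forall>k<n. \<forall>l<n. prec P (\<pi> ! k) (\<pi> ! l) \<longrightarrow> k < l)"
  proof (intro iffI allI impI)
    fix k l
    assume "\<forall>i j. prec P i j \<longrightarrow> inv_ent \<pi> i < inv_ent \<pi> j" "k < n" "l < n"
      "prec P (\<pi> ! k) (\<pi> ! l)"
    then show "k < l"
      using \<pi> by (metis inv_ent_nth Suc_less_SucD)
  next
    fix i j
    assume ord: "\<forall>k<n. \<forall>l<n. prec P (\<pi> ! k) (\<pi> ! l) \<longrightarrow> k < l" and ij: "prec P i j"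
    then have "i \<in> set \<pi>" "j \<in> set \<pi>"
      using assms \<pi>(3) by (auto simp: prec_def)
    then obtain k l where "k < n" "l < n" "i = \<pi> ! k" "j = \<pi> ! l"
      using \<pi>(1) by (auto simp: in_set_conv_nth)
    then show "inv_ent \<pi> i < inv_ent \<pi> j"
      using ord ij \<pi> by (simp add: inv_ent_nth)
  qed
  then show ?thesis
    by (simp add: linext_def True)
qed (simp add: linext_def)

lemma finite_linext: "finite (linext n P)"
proof (rule finite_subset)
  show "linext n P \<subseteq> {xs. set xs \<subseteq> {1..n} \<and> length xs = n}"
    by (auto simp: linext_def is_perm_def)
qed (rule finite_lists_length_eq, simp)

lemma ent_in_range: "\<pi> \<in> linext n P \<Longrightarrow> j \<in> {1..n} \<Longrightarrow> ent \<pi> j \<in> {1..n}"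
  by (auto simp: linext_def is_perm_def ent_def)

lemma length_tau [simp]: "length (tau P \<pi> j) = length \<pi>"
  by (simp add: tau_def)

lemma tau_Suc:
  "tau P \<pi> (Suc k) =
     (if incomparable P (\<pi> ! k) (\<pi> ! Suc k) then \<pi>[k := \<pi> ! Suc k, Suc k := \<pi> ! k] else \<pi>)"
  by (simp add: tau_def)

lemma tau_tau:
  assumes "j < length \<pi>"
  shows "tau P (tau P \<pi> j) j = \<pi>"
proof (cases j)
  case (Suc k)
  show ?thesis
  proof (cases "incomparable P (\<pi> ! k) (\<pi> ! Suc k)")
    case True
    let ?\<sigma> = "\<pi>[k := \<pi> ! Suc k, Suc k := \<pi> ! k]"
    have "?\<sigma> ! k = \<pi> ! Suc k" "?\<sigma> ! Suc k = \<pi> ! k"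
      using assms Suc by (auto simp: nth_list_update)
    moreover have "incomparable P (\<pi> ! Suc k) (\<pi> ! k)"
      using True by (auto simp: incomparable_def)
    ultimately show ?thesis
      using True assms Suc by (auto simp: tau_Suc list_eq_iff_nth_eq nth_list_update)
  qed (simp add: Suc tau_Suc)
qed (simp add: tau_def ent_def)

lemma tau_in_linext:
  assumes P: "P \<subseteq> {1..n} \<times> {1..n}" and \<pi>: "\<pi> \<in> linext n P" and j: "j < n"
  shows "tau P \<pi> j \<in> linext n P"
proof (cases "\<exists>k. j = Suc k \<and> incomparable P (\<pi> ! k) (\<pi> ! Suc k)")
  case True
  then obtain k where k: "j = Suc k" and inc: "incomparable P (\<pi> ! k) (\<pi> ! Suc k)"
    by blast
  have perm: "is_perm n \<pi>" and ord: "\<forall>k<n. \<forall>l<n. prec P (\<pi> ! k) (\<pi> ! l) \<longrightarrow> k < l"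
    using \<pi> linext_iff[OF P] by auto
  define t where "t i = (if i = k then Suc k else if i = Suc k then k else i)" for i
  have \<sigma>: "tau P \<pi> j ! i = \<pi> ! t i" if "i < n" for i
    using that j k inc perm by (auto simp: tau_Suc t_def nth_list_update is_perm_def)
  have "is_perm n (tau P \<pi> j)"
    using perm j k inc by (simp add: tau_Suc is_perm_def)
  moreover have "i < l" if "i < n" "l < n" "prec P (tau P \<pi> j ! i) (tau P \<pi> j ! l)" for i l
  proof -
    have "t i < n" "t l < n"
      using that(1,2) j k by (auto simp: t_def)
    then have "t i < t l"
      using ord that(3) \<sigma>[OF that(1)] \<sigma>[OF that(2)] by simp
    moreover have "\<not> (t i = k \<and> t l = Suc k)"
      using that(3) \<sigma>[OF that(1)] \<sigma>[OF that(2)] inc by (auto simp: incomparable_def)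
    ultimately show ?thesis
      by (auto simp: t_def split: if_splits)
  qed
  ultimately show ?thesis
    using linext_iff[OF P] by blast
next
  case False
  then have "tau P \<pi> j = \<pi>"
    by (cases j) (auto simp: tau_def ent_def)
  then show ?thesis
    using \<pi> by simp
qed

lemma identity_in_linext:
  assumes "P \<subseteq> {1..n} \<times> {1..n}" "natural_labeling n P"
  shows "[1..<Suc n] \<in> linext n P"
  using assms by (auto simp: linext_iff is_perm_def natural_labeling_def simp del: upt_Suc)

lemma exists_descent:
  assumes "is_perm n \<pi>" "\<pi> \<noteq> [1..<Suc n]"
  obtains k where "Suc k < n" "\<pi> ! Suc k < \<pi> ! k"
proof -
  have "set \<pi> = set [1..<Suc n]" "distinct \<pi>"
    using assms(1) by (simp_all add: is_perm_def atLeastLessThanSuc_atLeastAtMost del: upt_Suc)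
  then have "\<not> sorted \<pi>"
    using assms(2) sorted_distinct_set_unique[of \<pi> "[1..<Suc n]"] by (auto simp del: upt_Suc)
  then obtain k where "Suc k < length \<pi>" "\<not> \<pi> ! k \<le> \<pi> ! Suc k"
    unfolding sorted_iff_nth_Suc by blast
  then show ?thesis
    using that assms(1) by (simp add: is_perm_def)
qed

lemma sum_update_two:
  fixes f g :: "'a \<Rightarrow> 'b::cancel_comm_monoid_add"
  assumes "finite A" "k \<in> A" "l \<in> A" "k \<noteq> l" "\<forall>i\<in>A - {k, l}. g i = f i"
  shows "sum g A + f k + f l = sum f A + g k + g l"
proof -
  have "sum h A = sum h (A - {k, l}) + h k + h l" for h :: "'a \<Rightarrow> 'b"
    using assms(1-4) sum.subset_diff[of "{k, l}" A h] by (simp add: add.assoc)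
  moreover have "sum g (A - {k, l}) = sum f (A - {k, l})"
    using assms(5) by (intro sum.cong) auto
  ultimately show ?thesis
    by (simp add: add.assoc add.commute add.left_commute)
qed

text \<open>Swapping a descent strictly increases this potential, so repeatedly swapping descents
  terminates, necessarily at the identity.\<close>
definition pos_weight :: "nat list \<Rightarrow> nat" where
  "pos_weight \<pi> = (\<Sum>i<length \<pi>. i * \<pi> ! i)"

lemma pos_weight_swap_descent:
  assumes "Suc k < length \<pi>" "\<pi> ! Suc k < \<pi> ! k"
  shows "pos_weight \<pi> < pos_weight (\<pi>[k := \<pi> ! Suc k, Suc k := \<pi> ! k])"
proof -
  let ?\<sigma> = "\<pi>[k := \<pi> ! Suc k, Suc k := \<pi> ! k]"
  have "pos_weight ?\<sigma> + k * \<pi> ! k + Suc k * \<pi> ! Suc k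
      = pos_weight \<pi> + k * ?\<sigma> ! k + Suc k * ?\<sigma> ! Suc k"
    using sum_update_two[of "{..<length \<pi>}" k "Suc k" "\<lambda>i. i * ?\<sigma> ! i" "\<lambda>i. i * \<pi> ! i"] assms(1)
    by (simp add: pos_weight_def nth_list_update)
  also have "\<dots> = pos_weight \<pi> + k * \<pi> ! Suc k + Suc k * \<pi> ! k"
    using assms(1) by (simp add: nth_list_update)
  finally show ?thesis
    using assms(2) by (simp add: algebra_simps)
qed

lemma pos_weight_le:
  assumes "is_perm n \<pi>"
  shows "pos_weight \<pi> \<le> n * (n * n)"
proof -
  have "i * \<pi> ! i \<le> n * n" if "i < n" for i
    using assms that nth_mem[of i \<pi>] by (intro mult_le_mono) (auto simp: is_perm_def)
  then have "(\<Sum>i<n. i * \<pi> ! i) \<le> (\<Sum>i<n. n * n)"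
    by (intro sum_mono) simp
  then show ?thesis
    using assms by (simp add: pos_weight_def is_perm_def)
qed

definition tau_step :: "nat \<Rightarrow> (nat \<times> nat) set \<Rightarrow> (nat list \<times> nat list) set" where
  "tau_step n P = {(\<pi>, tau P \<pi> j) | \<pi> j. \<pi> \<in> linext n P \<and> j \<in> {1..<n}}"

lemma tau_stepI: "\<pi> \<in> linext n P \<Longrightarrow> j \<in> {1..<n} \<Longrightarrow> (\<pi>, tau P \<pi> j) \<in> tau_step n P"
  unfolding tau_step_def by blast

lemma tau_step_sym:
  assumes "P \<subseteq> {1..n} \<times> {1..n}" "(\<pi>, \<sigma>) \<in> tau_step n P"
  shows "(\<sigma>, \<pi>) \<in> tau_step n P"
proof -
  obtain j where j: "\<pi> \<in> linext n P" "j \<in> {1..<n}" "\<sigma> = tau P \<pi> j"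
    using assms(2) by (auto simp: tau_step_def)
  moreover have "length \<pi> = n"
    using j(1) by (simp add: linext_def is_perm_def)
  ultimately have "\<pi> = tau P \<sigma> j"
    by (simp add: tau_tau)
  moreover have "\<sigma> \<in> linext n P"
    using tau_in_linext[OF assms(1) j(1)] j by simp
  ultimately show ?thesis
    using tau_stepI[of \<sigma> n P j] j(2) by simp
qed

lemma tau_step_reaches_identity:
  assumes P: "P \<subseteq> {1..n} \<times> {1..n}" and nat: "natural_labeling n P" and \<pi>: "\<pi> \<in> linext n P"
  shows "(\<pi>, [1..<Suc n]) \<in> (tau_step n P)\<^sup>*"
  using \<pi>
proof (induction "n * (n * n) - pos_weight \<pi>" arbitrary: \<pi> rule: less_induct)
  case less
  show ?case
  proof (cases "\<pi> = [1..<Suc n]")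
    case False
    have perm: "is_perm n \<pi>" and ord: "\<forall>k<n. \<forall>l<n. prec P (\<pi> ! k) (\<pi> ! l) \<longrightarrow> k < l"
      using less.prems linext_iff[OF P] by auto
    obtain k where k: "Suc k < n" "\<pi> ! Suc k < \<pi> ! k"
      using exists_descent[OF perm False] .
    have "\<not> prec P (\<pi> ! k) (\<pi> ! Suc k)"
      using nat k(2) unfolding natural_labeling_def by (meson order.asym)
    moreover have "\<not> prec P (\<pi> ! Suc k) (\<pi> ! k)"
      using ord[rule_format, of "Suc k" k] k(1) by auto
    ultimately have "incomparable P (\<pi> ! k) (\<pi> ! Suc k)"
      by (simp add: incomparable_def)
    then have \<sigma>: "tau P \<pi> (Suc k) = \<pi>[k := \<pi> ! Suc k, Suc k := \<pi> ! k]"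
      by (simp add: tau_Suc)
    have \<sigma>_in: "tau P \<pi> (Suc k) \<in> linext n P"
      using tau_in_linext[OF P less.prems] k by simp
    have "pos_weight \<pi> < pos_weight (tau P \<pi> (Suc k))"
      using \<sigma> pos_weight_swap_descent[of k \<pi>] k perm by (simp add: is_perm_def)
    moreover have "pos_weight (tau P \<pi> (Suc k)) \<le> n * (n * n)"
      using \<sigma>_in pos_weight_le by (simp add: linext_def)
    ultimately have "n * (n * n) - pos_weight (tau P \<pi> (Suc k)) < n * (n * n) - pos_weight \<pi>"
      by linarith
    then have "(tau P \<pi> (Suc k), [1..<Suc n]) \<in> (tau_step n P)\<^sup>*"
      using less.hyps \<sigma>_in by blast
    moreover have "(\<pi>, tau P \<pi> (Suc k)) \<in> tau_step n P"
      using tau_stepI[OF less.prems] k by simp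
    ultimately show ?thesis
      by (rule converse_rtrancl_into_rtrancl[rotated])
  qed simp
qed

lemma tau_step_connected:
  assumes P: "P \<subseteq> {1..n} \<times> {1..n}" and "natural_labeling n P"
    and "\<pi> \<in> linext n P" "\<sigma> \<in> linext n P"
  shows "(\<pi>, \<sigma>) \<in> (tau_step n P)\<^sup>*"
proof -
  have "(tau_step n P)\<inverse> \<subseteq> tau_step n P"
    using tau_step_sym[OF P] by auto
  moreover have "([1..<Suc n], \<sigma>) \<in> ((tau_step n P)\<inverse>)\<^sup>*"
    using tau_step_reaches_identity[OF assms(1,2,4)] by (simp add: rtrancl_converse)
  ultimately have "([1..<Suc n], \<sigma>) \<in> (tau_step n P)\<^sup>*"
    using rtrancl_mono by blast
  with tau_step_reaches_identity[OF assms(1-3)] show ?thesis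
    by (rule rtrancl_trans)
qed

lemma irreducible_tau_chain:
  assumes P: "P \<subseteq> {1..n} \<times> {1..n}" and nat: "natural_labeling n P"
    and w: "\<forall>\<pi>\<in>linext n P. \<forall>j\<in>{1..<n}. 0 < w \<pi> j"
  shows "irreducible_chain (linext n P) {1..<n} (tau P) w"
proof -
  have "tau_step n P \<subseteq> digraph_edges (linext n P) {1..<n} (tau P) w"
    using w tau_in_linext[OF P] by (auto simp: tau_step_def digraph_edges_def)
  then show ?thesis
    unfolding irreducible_chain_def using tau_step_connected[OF P nat] rtrancl_mono by blast
qed


section \<open>Promotion\<close>

text \<open>An injective self-map of a finite set is a permutation of it, so every orbit is a cycle.\<close>
lemma funpow_return:
  assumes V: "finite V" "g ` V \<subseteq> V" "inj_on g V" and y: "y \<in> V"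
  obtains m where "(g ^^ m) (g y) = y"
proof -
  define h where "h z = (if z \<in> V then g z else z)" for z
  have "inj_on h V" "h ` V \<subseteq> V"
    using V by (auto simp: h_def inj_on_def)
  then have "bij_betw h V V"
    using endo_inj_surj[OF V(1)] by (simp add: bij_betw_def)
  then have "h permutes V"
    by (rule bij_imp_permutes) (simp add: h_def)
  then obtain k where "0 < k" "(h ^^ k) y = y"
    using permutation_self permutes_imp_permutation V(1) by metis
  moreover have "(h ^^ k) z = (g ^^ k) z" if "z \<in> V" for k z
  proof (induction k)
    case (Suc k)
    have "(g ^^ k) z \<in> V"
      using V(2) that by (induction k) auto
    then show ?case
      using Suc by (simp add: h_def)
  qed simp
  ultimately have "(g ^^ k) y = y"
    using y by simp
  moreover obtain m where "k = Suc m"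
    using \<open>0 < k\<close> gr0_implies_Suc by blast
  ultimately show ?thesis
    using that[of m] by (simp add: funpow_Suc_right del: funpow.simps)
qed

lemma rtrancl_converse_step_inj_on:
  assumes V: "finite V" "g ` V \<subseteq> V" "inj_on g V" and D: "\<forall>z\<in>V. (z, g z) \<in> D" and y: "y \<in> V"
  shows "(g y, y) \<in> D\<^sup>*"
proof -
  have "(z, (g ^^ k) z) \<in> D\<^sup>*" if "z \<in> V" for k z
  proof (induction k)
    case (Suc k)
    have "(g ^^ k) z \<in> V"
      using V(2) that by (induction k) auto
    then show ?case
      using Suc D by (auto intro: rtrancl_into_rtrancl)
  qed simp
  moreover obtain m where "(g ^^ m) (g y) = y"
    using funpow_return[OF V y] .
  ultimately show ?thesis
    using V(2) y by (metis image_subset_iff)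
qed

lemma inj_on_tau: "j < n \<Longrightarrow> inj_on (\<lambda>\<pi>. tau P \<pi> j) (linext n P)"
  by (rule inj_on_inverseI[of _ "\<lambda>\<pi>. tau P \<pi> j"]) (auto simp: tau_tau linext_def is_perm_def)

lemma fold_tau_in_linext:
  assumes "P \<subseteq> {1..n} \<times> {1..n}" "\<forall>i\<in>set L. i < n" "\<pi> \<in> linext n P"
  shows "fold (\<lambda>i \<sigma>. tau P \<sigma> i) L \<pi> \<in> linext n P"
  using assms(2,3) by (induction L arbitrary: \<pi>) (auto intro: tau_in_linext[OF assms(1)])

lemma inj_on_fold_tau:
  assumes "P \<subseteq> {1..n} \<times> {1..n}" "\<forall>i\<in>set L. i < n"
  shows "inj_on (fold (\<lambda>i \<sigma>. tau P \<sigma> i) L) (linext n P)"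
  using assms(2)
proof (induction L)
  case (Cons i L)
  have "inj_on (fold (\<lambda>i \<sigma>. tau P \<sigma> i) L \<circ> (\<lambda>\<pi>. tau P \<pi> i)) (linext n P)"
    using Cons inj_on_tau tau_in_linext[OF assms(1)]
    by (intro comp_inj_on) (auto intro: inj_on_subset)
  then show ?case
    by (simp add: comp_def)
qed simp

lemma prom_in_linext:
  "P \<subseteq> {1..n} \<times> {1..n} \<Longrightarrow> \<pi> \<in> linext n P \<Longrightarrow> prom n P \<pi> j \<in> linext n P"
  unfolding prom_def by (rule fold_tau_in_linext) auto

lemma inj_on_prom:
  "P \<subseteq> {1..n} \<times> {1..n} \<Longrightarrow> inj_on (\<lambda>\<pi>. prom n P \<pi> j) (linext n P)"
  unfolding prom_def by (rule inj_on_fold_tau) auto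

lemma prom_eq_prom_tau: "i < n \<Longrightarrow> prom n P \<pi> i = prom n P (tau P \<pi> i) (Suc i)"
  by (simp add: prom_def upt_conv_Cons)

lemma irreducible_prom_chain:
  assumes P: "P \<subseteq> {1..n} \<times> {1..n}" and nat: "natural_labeling n P"
    and w: "\<forall>\<pi>\<in>linext n P. \<forall>j\<in>{1..n}. 0 < w \<pi> j"
  shows "irreducible_chain (linext n P) {1..n} (prom n P) w"
proof -
  let ?D = "digraph_edges (linext n P) {1..n} (prom n P) w"
  have prom_edge: "(\<pi>, prom n P \<pi> j) \<in> ?D" if "\<pi> \<in> linext n P" "j \<in> {1..n}" for \<pi> j
    using that w prom_in_linext[OF P] by (auto simp: digraph_edges_def)
  have "(\<pi>, tau P \<pi> i) \<in> ?D\<^sup>*" if \<pi>: "\<pi> \<in> linext n P" and i: "i \<in> {1..<n}" for \<pi> i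
  proof -
    let ?g = "\<lambda>\<sigma>. prom n P \<sigma> (Suc i)"
    have \<sigma>: "tau P \<pi> i \<in> linext n P"
      using tau_in_linext[OF P \<pi>] i by simp
    have "(\<pi>, ?g (tau P \<pi> i)) \<in> ?D"
      using prom_edge[OF \<pi>, of i] i prom_eq_prom_tau[of i n P \<pi>] by simp
    moreover have "(?g (tau P \<pi> i), tau P \<pi> i) \<in> ?D\<^sup>*"
      using i prom_edge prom_in_linext[OF P] \<sigma>
      by (intro rtrancl_converse_step_inj_on[OF finite_linext _ inj_on_prom[OF P]]) auto
    ultimately show ?thesis
      by (rule converse_rtrancl_into_rtrancl)
  qed
  then have "tau_step n P \<subseteq> ?D\<^sup>*"
    by (auto simp: tau_step_def)
  then show ?thesis
    unfolding irreducible_chain_def using tau_step_connected[OF P nat] rtrancl_subset_rtrancl by blast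
qed

lemma irreducible_unique_stationary_tau_prom:
  assumes P: "P \<subseteq> {1..n} \<times> {1..n}" and nat: "natural_labeling n P"
    and w: "\<forall>\<pi>\<in>linext n P. \<forall>j\<in>{1..n}. 0 < w \<pi> j"
  shows "irreducible_chain (linext n P) {1..<n} (tau P) w \<and> unique_stationary (linext n P) {1..<n} (tau P) w
    \<and> irreducible_chain (linext n P) {1..n} (prom n P) w \<and> unique_stationary (linext n P) {1..n} (prom n P) w"
proof -
  have ne: "linext n P \<noteq> {}"
    using identity_in_linext[OF P nat] by blast
  have tau: "irreducible_chain (linext n P) {1..<n} (tau P) w"
    using w by (intro irreducible_tau_chain[OF P nat]) auto
  have prom: "irreducible_chain (linext n P) {1..n} (prom n P) w"
    using irreducible_prom_chain[OF P nat w] .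
  show ?thesis
    using tau prom w
    by (auto intro!: irreducible_chain_unique_stationary[OF finite_linext] ne less_imp_le)
qed

theorem corollary4p2:
  fixes n :: nat and P :: "(nat \<times> nat) set" and x :: "nat \<Rightarrow> real"
  assumes "poset_on n P" and "natural_labeling n P"
    and "\<forall>i\<in>{1..n}. x i > 0"
  shows
    "irreducible_chain (linext n P) {1..<n} (tau P) (\<lambda>\<pi> j. x j)
     \<and> unique_stationary (linext n P) {1..<n} (tau P) (\<lambda>\<pi> j. x j)
     \<and> irreducible_chain (linext n P) {1..<n} (tau P) (\<lambda>\<pi> j. x (ent \<pi> j))
     \<and> unique_stationary (linext n P) {1..<n} (tau P) (\<lambda>\<pi> j. x (ent \<pi> j))
     \<and> irreducible_chain (linext n P) {1..n} (prom n P) (\<lambda>\<pi> j. x j)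
     \<and> unique_stationary (linext n P) {1..n} (prom n P) (\<lambda>\<pi> j. x j)
     \<and> irreducible_chain (linext n P) {1..n} (prom n P) (\<lambda>\<pi> j. x (ent \<pi> j))
     \<and> unique_stationary (linext n P) {1..n} (prom n P) (\<lambda>\<pi> j. x (ent \<pi> j))"
proof -
  have P: "P \<subseteq> {1..n} \<times> {1..n}"
    using assms(1) by (simp add: poset_on_def)
  have "\<forall>\<pi>\<in>linext n P. \<forall>j\<in>{1..n}. 0 < (\<lambda>\<pi> j. x j) \<pi> j"
    using assms(3) by simp
  note uniform = irreducible_unique_stationary_tau_prom[OF P assms(2) this]
  have "\<forall>\<pi>\<in>linext n P. \<forall>j\<in>{1..n}. 0 < (\<lambda>\<pi> j. x (ent \<pi> j)) \<pi> j"
    using assms(3) ent_in_range by blast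
  note by_entry = irreducible_unique_stationary_tau_prom[OF P assms(2) this]
  show ?thesis
    using uniform by_entry by blast
qed

end
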